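(* The function $f$ maps $]0,\infty[$ into $]0,\infty[$ and has the properties (i) $f(1)=1$; (ii) $\log(1/f)$ is convex on $]0,\infty[$; (iii) $f(s)=f(s+1)-1/f(s+1)$ for all $s>0$. Conversely, if $\tilde f:]0,\infty[\to]0,\infty[$ satisfies (i)–(iii) (with $f$ replaced by $\tilde f$), then $\tilde f=f$ on $]0,\infty[$, and for $0<s\le1$ $$\tilde f(s)=\lim_{n\to\infty}\psi^{\circ n}\!\left(\frac{1}{m_{n-1}}\left(\frac{m_{n-1}}{m_n}\right)^{s}\right),$$ where $\psi(z)=z-1/z$ and $\psi^{\circ n}$ denotes the $n$-fold composition. In particular this limit formula holds for $f$.
   Context: Let $(m_n)_{n\ge0}$ be the unique sequence of positive reals with $m_0=1$ and $(1+m_1+\cdots+m_n)\,m_n=1$ for $n\ge1$. It is a Hausdorff moment sequence: let $\mu$ be the unique probability measure on $[0,1]$ with $\int_0^1 t^n\,d\mu(t)=m_n$ for all $n\ge0$. For real $s>0$ let $f(s)=\int_0^1\frac{1-t^s}{1-t}\,d\mu(t)$ (integrand equal to $s$ at $t=1$ and to $1$ at $t=0$). *)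

theory Defs
  imports "HOL-Probability.Probability"
begin

definition mseq :: "nat \<Rightarrow> real" where
  "mseq = (THE m. m 0 = 1 \<and> (\<forall>n. m n > 0) \<and>
                 (\<forall>n\<ge>1. (1 + (\<Sum>k=1..n. m k)) * m n = 1))"

definition moment_measure :: "real measure \<Rightarrow> bool" where
  "moment_measure M \<longleftrightarrow> prob_space M \<and> sets M = sets borel \<and>
     emeasure M {0..1} = 1 \<and>
     (\<forall>n. integrable M (\<lambda>t. t ^ n) \<and> (\<integral>t. t ^ n \<partial>M) = mseq n)"

text \<open>Integrand (1 - t^s)/(1 - t), with value s at t = 1 (and 1 at t = 0, since 0 powr s = 0).\<close>
definition kern :: "real \<Rightarrow> real \<Rightarrow> real" where
  "kern s t = (if t = 1 then s else (1 - t powr s) / (1 - t))"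

definition ffun :: "real measure \<Rightarrow> real \<Rightarrow> real" where
  "ffun M s = (\<integral>t. kern s t \<partial>M)"

definition psi :: "real \<Rightarrow> real" where
  "psi z = z - 1 / z"

end

theory Submission
  imports Defs "HOL-Complex_Analysis.Complex_Analysis"
begin

(* Write T n = 1 / m n (mseq_recip below). The defining relation says
   T n = T (n - 1) + 1 / T n, i.e. psi (T n) = T (n - 1) with T 0 = 1.

   Uniqueness and the limit formula: any g with (i)-(iii) has g (n + 1) = T n and
   g s = psi^n (g (s + n)). Log-concavity squeezes g (N + 1 + s) between
   T N (T (N + 1) / T N)^s and T N (T N / T (N - 1))^s, two numbers at distance
   O(1 / T N ^ 3), while psi^(N+1) is 2 T N-Lipschitz above T N; as T N ^ 2 >= N + 1,
   the error is O(1 / N).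

   Existence: f (1) = 1 is clear and log-concavity of f follows from concavity of
   s |-> (1 - t^s) / (1 - t). Since f (s + 1) - f (s) is the moment m (s) of order s,
   (iii) amounts to m (s) f (s + 1) = 1. The function D (z) = m (z) f (z + 1) - 1 is
   holomorphic for Re z > 0, grows at most linearly, and vanishes at the positive
   integers because f (n + 1) = 1 + m 1 + ... + m n. A bounded holomorphic function on
   the right half-plane vanishing at 1, 2, 3, ... is zero: dividing out the Blaschke
   factors (z - n) / (z + n) keeps it bounded by the Schwarz lemma, and their product
   tends to 0 because the harmonic series diverges. *)

section \<open>The reciprocals of the moments\<close>

(* (x + sqrt (x^2 + 4)) / 2 is the positive solution y of y - 1 / y = x. *)
fun mseq_recip :: "nat \<Rightarrow> real" where
  "mseq_recip 0 = 1"
| "mseq_recip (Suc n) = (mseq_recip n + sqrt (mseq_recip n ^ 2 + 4)) / 2"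

lemma mseq_recip_ge_1: "1 \<le> mseq_recip n"
proof (induction n)
  case (Suc n)
  have "mseq_recip n = sqrt (mseq_recip n ^ 2)"
    using Suc by simp
  also have "\<dots> \<le> sqrt (mseq_recip n ^ 2 + 4)"
    by (rule real_sqrt_le_mono) simp
  finally show ?case
    using Suc by simp
qed simp

lemma mseq_recip_pos: "0 < mseq_recip n"
  using mseq_recip_ge_1[of n] by simp

declare mseq_recip.simps(2) [simp del]

lemma psi_mseq_recip_Suc: "psi (mseq_recip (Suc n)) = mseq_recip n"
proof -
  define x where "x = mseq_recip n"
  define r where "r = sqrt (x ^ 2 + 4)"
  have y: "mseq_recip (Suc n) = (x + r) / 2"
    by (simp add: x_def r_def mseq_recip.simps(2))
  have "((x + r) / 2) ^ 2 = x * ((x + r) / 2) + 1"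
    by (simp add: r_def power2_eq_square field_simps)
  moreover have "0 < (x + r) / 2"
    using mseq_recip_pos[of "Suc n"] y by simp
  ultimately have "(x + r) / 2 - 1 / ((x + r) / 2) = x"
    by (simp add: field_simps power2_eq_square)
  then show ?thesis
    by (simp add: psi_def y x_def)
qed

lemma mseq_recip_Suc: "mseq_recip (Suc n) = mseq_recip n + 1 / mseq_recip (Suc n)"
  using psi_mseq_recip_Suc[of n] by (simp add: psi_def)

lemma psi_diff: "0 < a \<Longrightarrow> 0 < b \<Longrightarrow> psi b - psi a = (b - a) * (1 + 1 / (a * b))"
  by (simp add: psi_def field_simps)

lemma strict_mono_on_psi: "strict_mono_on {0<..} psi"
proof (rule strict_mono_onI)
  fix a b :: real
  assume "a \<in> {0<..}" "b \<in> {0<..}" "a < b"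
  then have "0 < (b - a) * (1 + 1 / (a * b))"
    by (intro mult_pos_pos add_pos_pos) auto
  then show "psi a < psi b"
    using psi_diff[of a b] \<open>a \<in> {0<..}\<close> \<open>b \<in> {0<..}\<close> by simp
qed

lemma inj_on_psi: "inj_on psi {0<..}"
  by (rule strict_mono_on_imp_inj_on[OF strict_mono_on_psi])

lemma sum_inverse_mseq_recip: "(\<Sum>k\<le>n. 1 / mseq_recip k) = mseq_recip n"
proof (induction n)
  case (Suc n)
  then show ?case
    using mseq_recip_Suc[of n] by simp
qed simp

lemma inverse_mseq_recip_unique:
  fixes m :: "nat \<Rightarrow> real"
  assumes m0: "m 0 = 1" and pos: "\<And>n. 0 < m n"
    and rel: "\<And>n. 1 \<le> n \<Longrightarrow> (1 + (\<Sum>k=1..n. m k)) * m n = 1"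
  shows "m n = 1 / mseq_recip n"
proof -
  have partial_sum: "1 + (\<Sum>k=1..n. m k) = 1 / m n" for n
  proof (cases n)
    case 0
    then show ?thesis
      using m0 by simp
  next
    case (Suc j)
    then show ?thesis
      using rel[of n] pos[of n] by (simp add: field_simps)
  qed
  have psi_step: "psi (1 / m (Suc j)) = 1 / m j" for j
    using partial_sum[of "Suc j"] partial_sum[of j] by (simp add: psi_def)
  have "1 / m n = mseq_recip n"
  proof (induction n)
    case 0
    then show ?case
      using m0 by simp
  next
    case (Suc n)
    have "psi (1 / m (Suc n)) = psi (mseq_recip (Suc n))"
      using Suc psi_step[of n] psi_mseq_recip_Suc[of n] by simp
    then show ?case
      by (rule inj_onD[OF inj_on_psi]) (use pos[of "Suc n"] mseq_recip_pos[of "Suc n"] in auto)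
  qed
  then show ?thesis
    using pos[of n] mseq_recip_pos[of n] by (simp add: field_simps)
qed

lemma mseq_eq: "mseq n = 1 / mseq_recip n"
proof -
  let ?P = "\<lambda>m::nat \<Rightarrow> real. m 0 = 1 \<and> (\<forall>n. m n > 0) \<and>
             (\<forall>n\<ge>1. (1 + (\<Sum>k=1..n. m k)) * m n = 1)"
  have "1 + (\<Sum>k=1..n. 1 / mseq_recip k) = mseq_recip n" for n
    using sum_inverse_mseq_recip[of n]
    by (simp add: atMost_atLeast0 sum.atLeast_Suc_atMost)
  then have "?P (\<lambda>n. 1 / mseq_recip n)"
    using mseq_recip_pos by (simp add: less_imp_neq[symmetric])
  moreover have "m = (\<lambda>n. 1 / mseq_recip n)" if "?P m" for m
    using that inverse_mseq_recip_unique[of m] by auto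
  ultimately have "mseq = (\<lambda>n. 1 / mseq_recip n)"
    unfolding mseq_def by (rule the_equality)
  then show ?thesis
    by (simp add: fun_eq_iff)
qed

lemma incseq_mseq_recip: "incseq mseq_recip"
proof (rule incseq_SucI)
  fix n
  have "0 < 1 / mseq_recip (Suc n)"
    using mseq_recip_pos[of "Suc n"] by simp
  then show "mseq_recip n \<le> mseq_recip (Suc n)"
    using mseq_recip_Suc[of n] by linarith
qed

lemma mseq_recip_sq_ge: "real n + 1 \<le> mseq_recip n ^ 2"
proof (induction n)
  case (Suc n)
  let ?x = "mseq_recip n" and ?y = "mseq_recip (Suc n)"
  have "?y ^ 2 = ?x * ?y + 1"
    using mseq_recip_Suc[of n] mseq_recip_pos[of "Suc n"] by (simp add: field_simps power2_eq_square)
  moreover have "?x * ?x \<le> ?x * ?y"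
    using incseq_SucD[OF incseq_mseq_recip, of n] mseq_recip_pos[of n] by (simp add: mult_left_mono)
  ultimately show ?case
    using Suc by (simp add: power2_eq_square)
qed simp

lemma mseq_recip_ratio_gap_eq:
  assumes "1 \<le> N"
  shows "mseq_recip N ^ 2 * (mseq_recip N / mseq_recip (N - 1) - mseq_recip (Suc N) / mseq_recip N)
           = 1 / (mseq_recip N ^ 2 - 1) + 1 / mseq_recip (Suc N) ^ 2"
proof -
  obtain j where N: "N = Suc j"
    using assms by (cases N) auto
  define w y x where "w = mseq_recip j" and "y = mseq_recip N" and "x = mseq_recip (Suc N)"
  have wy: "w = y - 1 / y" and yx: "y = x - 1 / x"
    using psi_mseq_recip_Suc[of j] psi_mseq_recip_Suc[of N] by (simp_all add: psi_def N w_def y_def x_def)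
  have y_sq: "1 < y ^ 2"
    using mseq_recip_sq_ge[of N] assms by (simp add: y_def)
  have y: "0 < y" and x: "0 < x"
    using mseq_recip_pos by (simp_all add: y_def x_def)
  have w_eq: "w = (y ^ 2 - 1) / y"
    using wy y by (simp add: field_simps power2_eq_square)
  have xy: "y * x = x ^ 2 - 1"
    using yx x by (simp add: field_simps power2_eq_square)
  have quartic: "y ^ 4 / (y ^ 2 - 1) = y ^ 2 + 1 + 1 / (y ^ 2 - 1)"
    using y_sq by (simp add: field_simps power2_eq_square power4_eq_xxxx)
  have y_sq_eq: "y ^ 2 = x ^ 2 - 2 + 1 / x ^ 2"
    unfolding yx using x by (simp add: field_simps power2_eq_square)
  have "y ^ 2 * (y / w - x / y) = y ^ 4 / (y ^ 2 - 1) - y * x"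
    unfolding w_eq using y y_sq by (simp add: field_simps power2_eq_square power4_eq_xxxx)
  then have "y ^ 2 * (y / w - x / y) = 1 / (y ^ 2 - 1) + 1 / x ^ 2"
    using quartic y_sq_eq xy by linarith
  then show ?thesis
    by (simp add: N w_def y_def x_def)
qed

lemma powr_diff_le_diff:
  fixes q r s :: real
  assumes "1 \<le> q" "q \<le> r" "0 \<le> s" "s \<le> 1"
  shows "r powr s - q powr s \<le> r - q"
proof -
  have q0: "0 < q"
    using assms by simp
  have q_powr: "q powr s \<le> q"
    using powr_mono[of s 1 q] assms q0 by simp
  have "(r / q) powr s \<le> r / q"
    using powr_mono[of s 1 "r / q"] assms q0 by simp
  then have "q powr s * (r / q) powr s \<le> q powr s * (r / q)"
    by (rule mult_left_mono) simp
  moreover have "r powr s = q powr s * (r / q) powr s"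
    using q0 assms by (simp add: powr_mult[symmetric])
  ultimately have "r powr s - q powr s \<le> q powr s * (r / q - 1)"
    by (simp add: algebra_simps)
  also have "\<dots> \<le> q * (r / q - 1)"
    using q_powr assms q0 by (intro mult_right_mono) auto
  also have "\<dots> = r - q"
    using q0 by (simp add: field_simps)
  finally show ?thesis .
qed

lemma mseq_recip_interpolation_gap:
  assumes N: "1 \<le> N" and s: "0 \<le> s" "s \<le> 1"
  shows "mseq_recip N * (mseq_recip N / mseq_recip (N - 1)) powr s
           - mseq_recip N * (mseq_recip (Suc N) / mseq_recip N) powr s
         \<le> 2 / (mseq_recip N * (mseq_recip N ^ 2 - 1))"
proof -
  define y r\<^sub>1 r\<^sub>2 where "y = mseq_recip N" and "r\<^sub>1 = mseq_recip (Suc N) / mseq_recip N"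
    and "r\<^sub>2 = mseq_recip N / mseq_recip (N - 1)"
  have y: "0 < y" "1 < y ^ 2" and x: "y \<le> mseq_recip (Suc N)"
    using mseq_recip_pos[of N] mseq_recip_sq_ge[of N] N incseq_SucD[OF incseq_mseq_recip, of N]
    by (simp_all add: y_def)
  have gap: "y ^ 2 * (r\<^sub>2 - r\<^sub>1) = 1 / (y ^ 2 - 1) + 1 / mseq_recip (Suc N) ^ 2"
    using mseq_recip_ratio_gap_eq[OF N] by (simp add: y_def r\<^sub>1_def r\<^sub>2_def)
  have "y ^ 2 \<le> mseq_recip (Suc N) ^ 2"
    using x y by (intro power_mono) auto
  then have "1 / mseq_recip (Suc N) ^ 2 \<le> 1 / (y ^ 2 - 1)"
    using y by (intro divide_left_mono) (auto intro!: mult_pos_pos)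
  moreover have "0 \<le> 1 / (y ^ 2 - 1)" "0 \<le> 1 / mseq_recip (Suc N) ^ 2"
    using y by simp_all
  ultimately have "0 \<le> y ^ 2 * (r\<^sub>2 - r\<^sub>1)" and "y ^ 2 * (r\<^sub>2 - r\<^sub>1) \<le> 2 / (y ^ 2 - 1)"
    unfolding gap by linarith+
  then have r: "r\<^sub>1 \<le> r\<^sub>2" and r_gap: "y * (r\<^sub>2 - r\<^sub>1) \<le> 2 / (y * (y ^ 2 - 1))"
    using y by (simp_all add: zero_le_mult_iff field_simps power2_eq_square)
  have "1 \<le> r\<^sub>1"
    using x y by (simp add: r\<^sub>1_def y_def)
  then have "r\<^sub>2 powr s - r\<^sub>1 powr s \<le> r\<^sub>2 - r\<^sub>1"
    using powr_diff_le_diff r s by blast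
  then have "y * r\<^sub>2 powr s - y * r\<^sub>1 powr s \<le> y * (r\<^sub>2 - r\<^sub>1)"
    using y mult_left_mono[of _ _ y] by (simp add: right_diff_distrib[symmetric])
  then show ?thesis
    using r_gap by (simp add: y_def r\<^sub>1_def r\<^sub>2_def)
qed

section \<open>Iterates of psi\<close>

lemma psi_step_bounds:
  assumes "mseq_recip (Suc n) \<le> a" "a \<le> b"
  shows "mseq_recip n \<le> psi a" and "psi a \<le> psi b"
    and "(psi b - psi a) * mseq_recip n \<le> (b - a) * mseq_recip (Suc n)"
proof -
  define T where "T = mseq_recip (Suc n)"
  have T: "0 < T" "T \<le> a" "a \<le> b"
    using assms mseq_recip_pos by (simp_all add: T_def)
  have ab: "0 < a" "0 < b"
    using T by linarith+
  have step: "psi b - psi a = (b - a) * (1 + 1 / (a * b))"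
    using psi_diff ab by simp
  have "0 \<le> (a - T) * (1 + 1 / (T * a))"
    using T ab by (intro mult_nonneg_nonneg) auto
  then show "mseq_recip n \<le> psi a"
    using psi_diff[of T a] T ab psi_mseq_recip_Suc[of n] unfolding T_def by linarith
  have "0 \<le> (b - a) * (1 + 1 / (a * b))"
    using T ab by (intro mult_nonneg_nonneg) auto
  then show "psi a \<le> psi b"
    using step by simp
  have "1 / (a * b) \<le> 1 / T ^ 2"
    using T ab mult_mono[of T a T b] by (simp add: power2_eq_square frac_le)
  then have "(1 + 1 / (a * b)) * mseq_recip n \<le> (1 + 1 / T ^ 2) * mseq_recip n"
    using mseq_recip_pos[of n] by (intro mult_right_mono) auto
  moreover have "(1 + 1 / T ^ 2) * mseq_recip n = T - 1 / T ^ 3"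
  proof -
    have "mseq_recip n = T - 1 / T"
      using psi_mseq_recip_Suc[of n] by (simp add: psi_def T_def)
    moreover have "(1 + 1 / T ^ 2) * (T - 1 / T) = T - 1 / T ^ 3"
      using T by (simp add: field_simps power2_eq_square power3_eq_cube)
    ultimately show ?thesis
      by simp
  qed
  moreover have "0 \<le> 1 / T ^ 3"
    using T by simp
  ultimately have "(1 + 1 / (a * b)) * mseq_recip n \<le> T"
    by linarith
  then show "(psi b - psi a) * mseq_recip n \<le> (b - a) * mseq_recip (Suc n)"
    using T mult_left_mono[of _ T "b - a"] by (simp add: step T_def[symmetric] mult.assoc)
qed

lemma funpow_psi_increment_bounds:
  assumes "mseq_recip n \<le> a" "a \<le> b"
  shows "0 \<le> (psi ^^ Suc n) b - (psi ^^ Suc n) a \<and>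
         (psi ^^ Suc n) b - (psi ^^ Suc n) a \<le> (b - a) * (2 * mseq_recip n)"
  using assms
proof (induction n arbitrary: a b)
  case 0
  then have "1 \<le> a" "a \<le> b" "1 / (a * b) \<le> 1"
    using mult_mono[of 1 a 1 b] by simp_all
  then show ?case
    using psi_diff[of a b] mult_left_mono[of "1 + 1 / (a * b)" 2 "b - a"] by simp
next
  case (Suc n)
  note step = psi_step_bounds[OF Suc.prems]
  have "(psi ^^ Suc (Suc n)) x = (psi ^^ Suc n) (psi x)" for x
    by (simp only: funpow_Suc_right o_def)
  moreover have "(psi b - psi a) * (2 * mseq_recip n) \<le> (b - a) * (2 * mseq_recip (Suc n))"
    using step(3) by simp
  ultimately show ?case
    using Suc.IH[OF step(1,2)] by auto
qed

section \<open>Uniqueness and the limit formula\<close>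

lemma log_concave_lower_interpolation:
  fixes g :: "real \<Rightarrow> real"
  assumes cvx: "convex_on {0<..} (\<lambda>s. ln (1 / g s))" and pos: "\<And>s. 0 < s \<Longrightarrow> 0 < g s"
    and a: "0 < a" and s: "0 \<le> s" "s \<le> 1"
  shows "g a * (g (a + 1) / g a) powr s \<le> g (a + s)"
proof -
  have ln_inv: "ln (1 / g x) = - ln (g x)" if "0 < x" for x
    using pos[OF that] by (simp add: ln_div)
  have "ln (1 / g ((1 - s) *\<^sub>R a + s *\<^sub>R (a + 1))) \<le> (1 - s) * ln (1 / g a) + s * ln (1 / g (a + 1))"
    using a s by (intro convex_onD[OF cvx]) auto
  moreover have "(1 - s) *\<^sub>R a + s *\<^sub>R (a + 1) = a + s"
    by (simp add: algebra_simps)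
  ultimately have "ln (g a) + s * (ln (g (a + 1)) - ln (g a)) \<le> ln (g (a + s))"
    using a s ln_inv[of a] ln_inv[of "a + 1"] ln_inv[of "a + s"] by (simp add: algebra_simps)
  moreover have "ln (g a * (g (a + 1) / g a) powr s) = ln (g a) + s * (ln (g (a + 1)) - ln (g a))"
    using pos[of a] pos[of "a + 1"] a by (simp add: ln_mult ln_powr ln_div)
  ultimately show ?thesis
    using pos[of a] pos[of "a + 1"] pos[of "a + s"] a s by (subst ln_le_cancel_iff[symmetric]) auto
qed

lemma log_concave_upper_interpolation:
  fixes g :: "real \<Rightarrow> real"
  assumes cvx: "convex_on {0<..} (\<lambda>s. ln (1 / g s))" and pos: "\<And>s. 0 < s \<Longrightarrow> 0 < g s"
    and a: "1 < a" and s: "0 \<le> s"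
  shows "g (a + s) \<le> g a * (g a / g (a - 1)) powr s"
proof -
  have ln_inv: "ln (1 / g x) = - ln (g x)" if "0 < x" for x
    using pos[OF that] by (simp add: ln_div)
  define t where "t = 1 / (1 + s)"
  have t: "0 \<le> t" "t \<le> 1" "t * (1 + s) = 1" "(1 + s) * (1 - t) = s"
    using s by (auto simp: t_def field_simps)
  have "(1 - t) *\<^sub>R (a - 1) + t *\<^sub>R (a + s) = a - 1 + t * (1 + s)"
    by (simp add: algebra_simps)
  then have "(1 - t) *\<^sub>R (a - 1) + t *\<^sub>R (a + s) = a"
    using t by simp
  moreover have "ln (1 / g ((1 - t) *\<^sub>R (a - 1) + t *\<^sub>R (a + s)))
      \<le> (1 - t) * ln (1 / g (a - 1)) + t * ln (1 / g (a + s))"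
    using a s t by (intro convex_onD[OF cvx]) auto
  ultimately have "- ln (g a) \<le> (1 - t) * - ln (g (a - 1)) + t * - ln (g (a + s))"
    using a s ln_inv[of a] ln_inv[of "a - 1"] ln_inv[of "a + s"] by simp
  then have "(1 + s) * - ln (g a) \<le> (1 + s) * ((1 - t) * - ln (g (a - 1)) + t * - ln (g (a + s)))"
    using s by (intro mult_left_mono) auto
  also have "\<dots> = ((1 + s) * (1 - t)) * - ln (g (a - 1)) + (t * (1 + s)) * - ln (g (a + s))"
    by (simp add: algebra_simps)
  also have "\<dots> = s * - ln (g (a - 1)) - ln (g (a + s))"
    using t by simp
  finally have "ln (g (a + s)) \<le> ln (g a) + s * (ln (g a) - ln (g (a - 1)))"
    by (simp add: algebra_simps)
  moreover have "ln (g a * (g a / g (a - 1)) powr s) = ln (g a) + s * (ln (g a) - ln (g (a - 1)))"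
    using pos[of a] pos[of "a - 1"] a by (simp add: ln_mult ln_powr ln_div)
  ultimately show ?thesis
    using pos[of a] pos[of "a - 1"] pos[of "a + s"] a s by (subst ln_le_cancel_iff[symmetric]) auto
qed

definition admissible :: "(real \<Rightarrow> real) \<Rightarrow> bool" where
  "admissible g \<longleftrightarrow> (\<forall>s>0. g s > 0) \<and> g 1 = 1 \<and> convex_on {0<..} (\<lambda>s. ln (1 / g s)) \<and>
     (\<forall>s>0. g s = g (s + 1) - 1 / g (s + 1))"

lemma admissible_pos: "admissible g \<Longrightarrow> 0 < s \<Longrightarrow> 0 < g s"
  unfolding admissible_def by blast

lemma admissible_psi: "admissible g \<Longrightarrow> 0 < s \<Longrightarrow> psi (g (s + 1)) = g s"
  unfolding admissible_def psi_def by metis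

lemma admissible_nat:
  assumes "admissible g"
  shows "g (real (Suc n)) = mseq_recip n"
proof (induction n)
  case 0
  have "g 1 = 1"
    using assms unfolding admissible_def by blast
  then show ?case
    by simp
next
  case (Suc n)
  have "psi (g (real (Suc n) + 1)) = psi (mseq_recip (Suc n))"
    using admissible_psi[OF assms, of "real (Suc n)"] Suc psi_mseq_recip_Suc[of n] by simp
  then have "g (real (Suc n) + 1) = mseq_recip (Suc n)"
    by (rule inj_onD[OF inj_on_psi]) (use admissible_pos[OF assms] mseq_recip_pos in auto)
  then show ?case
    by (simp add: add.commute)
qed

lemma admissible_funpow:
  assumes "admissible g" "0 < s"
  shows "g s = (psi ^^ n) (g (s + real n))"
proof (induction n)
  case (Suc n)
  have "(psi ^^ Suc n) (g (s + real (Suc n))) = (psi ^^ n) (psi (g (s + real n + 1)))"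
    by (simp only: funpow_Suc_right o_def of_nat_Suc add.commute[of 1 "real n"] add.assoc)
  also have "\<dots> = (psi ^^ n) (g (s + real n))"
    using admissible_psi[OF assms(1), of "s + real n"] assms(2) by simp
  finally show ?case
    using Suc by simp
qed simp

lemma admissible_approx:
  assumes adm: "admissible g" and N: "1 \<le> N" and s: "0 < s" "s \<le> 1"
  shows "\<bar>(psi ^^ Suc N) (mseq_recip N * (mseq_recip (Suc N) / mseq_recip N) powr s) - g s\<bar>
           \<le> 4 / real N"
proof -
  define T where "T = mseq_recip"
  define a where "a = real (Suc N)"
  define L U G where "L = T N * (T (Suc N) / T N) powr s" and "U = T N * (T N / T (N - 1)) powr s"
    and "G = g (a + s)"
  have cvx: "convex_on {0<..} (\<lambda>s. ln (1 / g s))" and pos: "\<And>s. 0 < s \<Longrightarrow> 0 < g s"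
    using adm unfolding admissible_def by blast+
  have g_nat: "g a = T N" "g (a + 1) = T (Suc N)" "g (a - 1) = T (N - 1)"
    using admissible_nat[OF adm, of N] admissible_nat[OF adm, of "Suc N"]
      admissible_nat[OF adm, of "N - 1"] N by (simp_all add: T_def a_def add.commute)
  have a: "0 < a" "1 < a"
    using N by (simp_all add: a_def)
  have LG: "L \<le> G"
    using log_concave_lower_interpolation[OF cvx pos a(1), of s] s by (simp add: g_nat L_def G_def)
  have GU: "G \<le> U"
    using log_concave_upper_interpolation[OF cvx pos a(2), of s] s by (simp add: g_nat U_def G_def)
  have T: "0 < T N" "T N \<le> T (Suc N)"
    using mseq_recip_pos incseq_SucD[OF incseq_mseq_recip] by (simp_all add: T_def)
  then have "T N \<le> L"
    using ge_one_powr_ge_zero[of "T (Suc N) / T N" s] s by (simp add: L_def)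
  then have iter: "0 \<le> (psi ^^ Suc N) G - (psi ^^ Suc N) L"
    "(psi ^^ Suc N) G - (psi ^^ Suc N) L \<le> (G - L) * (2 * T N)"
    using funpow_psi_increment_bounds[of N L G] LG by (simp_all add: T_def)
  have "(G - L) * (2 * T N) \<le> 2 / (T N * (T N ^ 2 - 1)) * (2 * T N)"
    using mseq_recip_interpolation_gap[OF N, of s] s GU T by (intro mult_right_mono) (auto simp: T_def L_def U_def)
  also have "\<dots> = 4 / (T N ^ 2 - 1)"
    using T by simp
  also have "\<dots> \<le> 4 / real N"
    using mseq_recip_sq_ge[of N] N by (intro divide_left_mono) (auto simp: T_def)
  finally have "(psi ^^ Suc N) G - (psi ^^ Suc N) L \<le> 4 / real N"
    using iter(2) by linarith
  moreover have "g s = (psi ^^ Suc N) G"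
    using admissible_funpow[OF adm s(1), of "Suc N"] by (simp add: G_def a_def add.commute)
  ultimately show ?thesis
    using iter(1) by (simp add: L_def T_def)
qed

lemma admissible_tendsto:
  assumes adm: "admissible g" and s: "s \<in> {0<..1}"
  shows "(\<lambda>n. (psi ^^ n) ((1 / mseq (n - 1)) * (mseq (n - 1) / mseq n) powr s)) \<longlonglongrightarrow> g s"
proof -
  let ?x = "\<lambda>N. (psi ^^ Suc N) (mseq_recip N * (mseq_recip (Suc N) / mseq_recip N) powr s)"
  have s: "0 < s" "s \<le> 1"
    using s by simp_all
  have "eventually (\<lambda>N. norm (?x N - g s) \<le> 4 / real N) sequentially"
    using eventually_ge_at_top[of 1]
  proof eventually_elim
    case (elim N)
    show ?case
      using admissible_approx[OF adm elim s] by simp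
  qed
  then have "(\<lambda>N. ?x N - g s) \<longlonglongrightarrow> 0"
    by (rule Lim_null_comparison) (rule lim_const_over_n)
  then have "?x \<longlonglongrightarrow> g s"
    by (rule LIM_zero_cancel)
  moreover have "(1 / mseq N) * (mseq N / mseq (Suc N)) powr s
      = mseq_recip N * (mseq_recip (Suc N) / mseq_recip N) powr s" for N
    using mseq_recip_pos[of N] mseq_recip_pos[of "Suc N"] by (simp add: mseq_eq)
  ultimately have "(\<lambda>N. (psi ^^ Suc N) ((1 / mseq (Suc N - 1)) * (mseq (Suc N - 1) / mseq (Suc N)) powr s))
      \<longlonglongrightarrow> g s"
    by simp
  then show ?thesis
    by (rule LIMSEQ_imp_Suc)
qed

lemma admissible_unique:
  assumes g: "admissible g" and h: "admissible h" and s: "0 < s"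
  shows "g s = h s"
proof -
  have "g x = h x" if "0 < x" "x \<le> real k + 1" for k x
    using that
  proof (induction k arbitrary: x)
    case 0
    then have "x \<in> {0<..1}"
      by simp
    then show ?case
      using LIMSEQ_unique admissible_tendsto[OF g] admissible_tendsto[OF h] by blast
  next
    case (Suc k)
    show ?case
    proof (cases "x \<le> real k + 1")
      case True
      then show ?thesis
        using Suc by blast
    next
      case False
      then have "psi (g x) = psi (h x)"
        using Suc.IH[of "x - 1"] Suc.prems admissible_psi[OF g, of "x - 1"]
          admissible_psi[OF h, of "x - 1"] by simp
      then show ?thesis
        by (rule inj_onD[OF inj_on_psi]) (use admissible_pos[OF g] admissible_pos[OF h] Suc.prems in auto)
    qed
  qed
  moreover have "s \<le> real (nat \<lceil>s\<rceil>) + 1"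
    by linarith
  ultimately show ?thesis
    using s by blast
qed

section \<open>Bounded holomorphic functions on the right half-plane\<close>

definition right_half_plane :: "complex set" where
  "right_half_plane = {z. 0 < Re z}"

lemma open_right_half_plane: "open right_half_plane"
  unfolding right_half_plane_def by (simp add: open_halfspace_Re_gt)

lemma Schwarz_Lemma_le:
  assumes hol: "f holomorphic_on ball 0 1" and f0: "f 0 = 0"
    and bd: "\<And>z. norm z < 1 \<Longrightarrow> norm (f z) \<le> 1" and w: "norm w < 1"
  shows "norm (f w) \<le> norm w"
proof (rule field_le_epsilon)
  fix e :: real
  assume e: "0 < e"
  define c where "c = complex_of_real (1 + e)"
  have c_norm: "norm c = 1 + e"
    unfolding c_def norm_of_real using e by simp
  then have c: "norm c = 1 + e" "c \<noteq> 0"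
    using e by auto
  define f' where "f' z = f z / c" for z
  have "norm (f' w) \<le> norm w"
  proof (rule Schwarz_Lemma(1))
    show "f' holomorphic_on ball 0 1"
      unfolding f'_def using hol c by (intro holomorphic_intros) auto
    show "f' 0 = 0"
      by (simp add: f'_def f0)
    show "norm (f' z) < 1" if "norm z < 1" for z
      using bd[OF that] c e by (simp add: f'_def norm_divide)
  qed (fact w)
  then have "norm (f w) \<le> (1 + e) * norm w"
    using c e by (simp add: f'_def norm_divide field_simps)
  also have "\<dots> \<le> norm w + e"
    using w e by (simp add: algebra_simps)
  finally show "norm (f w) \<le> norm w + e" .
qed

lemma Re_cayley_pos:
  fixes a :: real and w :: complex
  assumes "0 < a" "norm w < 1"
  shows "0 < Re (of_real a * (1 + w) / (1 - w))"
proof -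
  have "1 - w \<noteq> 0"
    using assms by auto
  have norm_sq: "(norm w)\<^sup>2 = (Re w)\<^sup>2 + (Im w)\<^sup>2"
    by (simp add: cmod_power2)
  have "Re ((1 + w) / (1 - w)) = ((1 + Re w) * (1 - Re w) + Im w * (- Im w)) / (norm (1 - w))\<^sup>2"
    by (simp add: Re_divide cmod_power2)
  also have "\<dots> = (1 - (norm w)\<^sup>2) / (norm (1 - w))\<^sup>2"
    unfolding norm_sq by (simp add: power2_eq_square algebra_simps)
  finally have "Re ((1 + w) / (1 - w)) = (1 - (norm w)\<^sup>2) / (norm (1 - w))\<^sup>2" .
  moreover have "(norm w)\<^sup>2 < 1"
    using assms by (simp add: power_less_one_iff)
  ultimately have "0 < Re ((1 + w) / (1 - w))"
    using \<open>1 - w \<noteq> 0\<close> by simp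
  moreover have "Re (of_real a * ((1 + w) / (1 - w))) = a * Re ((1 + w) / (1 - w))"
    by (simp only: times_complex.sel Re_complex_of_real Im_complex_of_real mult_zero_left diff_0_right)
  ultimately show ?thesis
    using assms by (simp add: times_divide_eq_right[symmetric] del: times_divide_eq_right)
qed

lemma norm_diff_lt_norm_add:
  fixes a :: real
  assumes "0 < a" "0 < Re z"
  shows "norm (z - of_real a) < norm (z + of_real a)"
proof -
  have "(norm (z - of_real a))\<^sup>2 = (Re z - a)\<^sup>2 + (Im z)\<^sup>2"
    and "(norm (z + of_real a))\<^sup>2 = (Re z + a)\<^sup>2 + (Im z)\<^sup>2"
    by (simp_all add: cmod_power2)
  moreover have "0 < a * Re z"
    using assms by simp
  ultimately have "(norm (z - of_real a))\<^sup>2 < (norm (z + of_real a))\<^sup>2"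
    by (simp add: power2_eq_square algebra_simps)
  then show ?thesis
    by (simp add: power2_less_imp_less)
qed

(* Schwarz's lemma transported by the Cayley map w |-> a (1 + w) / (1 - w). *)
lemma norm_le_blaschke_factor:
  fixes a :: real
  assumes hol: "h holomorphic_on right_half_plane"
    and bd: "\<And>z. z \<in> right_half_plane \<Longrightarrow> norm (h z) \<le> 1"
    and a: "0 < a" and h0: "h (of_real a) = 0" and z: "z \<in> right_half_plane"
  shows "norm (h z) \<le> norm ((z - of_real a) / (z + of_real a))"
proof -
  define A where "A = complex_of_real a"
  define cayley where "cayley w = A * (1 + w) / (1 - w)" for w
  have cayley_in: "cayley w \<in> right_half_plane" if "norm w < 1" for w
    using Re_cayley_pos[OF a that] by (simp add: right_half_plane_def cayley_def A_def)
  have "cayley holomorphic_on ball 0 1"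
    unfolding cayley_def by (intro holomorphic_intros) auto
  then have "(h \<circ> cayley) holomorphic_on ball 0 1"
    by (rule holomorphic_on_compose_gen[OF _ hol]) (auto simp: cayley_in)
  moreover have "(h \<circ> cayley) 0 = 0"
    using h0 by (simp add: cayley_def A_def)
  ultimately have schwarz: "norm (h (cayley w)) \<le> norm w" if "norm w < 1" for w
    using Schwarz_Lemma_le[of "h \<circ> cayley" w] that bd cayley_in by simp
  define w where "w = (z - A) / (z + A)"
  have nz: "z + A \<noteq> 0"
    using z a by (auto simp: right_half_plane_def A_def complex_eq_iff)
  have "norm w < 1"
    using norm_diff_lt_norm_add[OF a] z nz by (simp add: w_def norm_divide A_def right_half_plane_def)
  moreover have "cayley w = z"
  proof -
    have "1 - w = 2 * A / (z + A)" "1 + w = 2 * z / (z + A)"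
      using nz by (simp_all add: w_def field_simps)
    moreover have "2 * A / (z + A) \<noteq> 0"
      using nz a by (simp add: A_def)
    moreover have "A * (2 * z / (z + A)) = z * (2 * A / (z + A))"
      by (simp add: algebra_simps)
    ultimately show ?thesis
      unfolding cayley_def by simp
  qed
  ultimately have "norm (h z) \<le> norm w"
    using schwarz by metis
  then show ?thesis
    by (simp add: w_def A_def)
qed

lemma norm_le_by_continuity:
  fixes g :: "'a::{perfect_space, metric_space} \<Rightarrow> 'b::real_normed_vector"
  assumes "continuous_on S g" "open S" "a \<in> S" "\<And>z. z \<in> S \<Longrightarrow> z \<noteq> a \<Longrightarrow> norm (g z) \<le> B"
  shows "norm (g a) \<le> B"
proof (rule Lim_norm_ubound)
  show "(g \<longlongrightarrow> g a) (at a)"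
    using assms continuous_on_eq_continuous_at isCont_def by blast
  show "eventually (\<lambda>z. norm (g z) \<le> B) (at a)"
    using eventually_at_in_open[OF assms(2,3)] by eventually_elim (use assms(4) in auto)
qed simp

lemma divide_blaschke_factor:
  fixes a :: real
  assumes hol: "h holomorphic_on right_half_plane"
    and bd: "\<And>z. z \<in> right_half_plane \<Longrightarrow> norm (h z) \<le> 1"
    and a: "0 < a" and h0: "h (of_real a) = 0"
  obtains g where "g holomorphic_on right_half_plane"
    "\<And>z. z \<in> right_half_plane \<Longrightarrow> norm (g z) \<le> 1"
    "\<And>z. z \<in> right_half_plane \<Longrightarrow> h z = (z - of_real a) / (z + of_real a) * g z"
proof -
  define A where "A = complex_of_real a"
  have A: "A \<in> right_half_plane" "h A = 0"
    using a h0 by (simp_all add: A_def right_half_plane_def)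
  have nz: "z + A \<noteq> 0" if "z \<in> right_half_plane" for z
    using that a by (auto simp: right_half_plane_def A_def complex_eq_iff)
  define F where "F z = (if z = A then deriv h A else h z / (z - A) - h A / (z - A))" for z
  have "F holomorphic_on right_half_plane"
    unfolding F_def by (rule pole_theorem_open[OF hol open_right_half_plane]) simp
  then have ghol: "(\<lambda>z. (z + A) * F z) holomorphic_on right_half_plane"
    by (intro holomorphic_intros)
  have g_off: "(z + A) * F z = (z + A) * h z / (z - A)" if "z \<noteq> A" for z
    using that A by (simp add: F_def)
  have factor: "h z = (z - A) / (z + A) * ((z + A) * F z)" if "z \<in> right_half_plane" for z
    using nz[OF that] A g_off[of z] by (cases "z = A") (auto simp: field_simps)
  have "norm ((z + A) * F z) \<le> 1" if "z \<in> right_half_plane" "z \<noteq> A" for z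
  proof -
    have "norm (h z) * norm (z + A) \<le> norm (z - A)"
      using norm_le_blaschke_factor[OF hol bd a h0 that(1)] nz[OF that(1)]
      by (simp add: A_def norm_divide field_simps)
    moreover have "norm ((z + A) * F z) = norm (z + A) * norm (h z) / norm (z - A)"
      using that(2) by (simp add: g_off norm_divide norm_mult)
    moreover have "0 < norm (z - A)"
      using that(2) by simp
    ultimately show ?thesis
      by (simp add: divide_le_eq_1 mult.commute)
  qed
  then have "norm ((z + A) * F z) \<le> 1" if "z \<in> right_half_plane" for z
    using norm_le_by_continuity[OF holomorphic_on_imp_continuous_on[OF ghol] open_right_half_plane A(1)]
      that by (cases "z = A") auto
  with ghol factor show ?thesis
    by (intro that[of "\<lambda>z. (z + A) * F z"]) (auto simp: A_def)
qed

lemma divide_blaschke_product: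
  assumes hol: "h holomorphic_on right_half_plane"
    and bd: "\<And>z. z \<in> right_half_plane \<Longrightarrow> norm (h z) \<le> 1"
  shows "(\<And>n. 1 \<le> n \<Longrightarrow> n \<le> N \<Longrightarrow> h (of_nat n) = 0) \<Longrightarrow>
     \<exists>g. g holomorphic_on right_half_plane \<and> (\<forall>z\<in>right_half_plane. norm (g z) \<le> 1) \<and>
        (\<forall>z\<in>right_half_plane. h z = (\<Prod>n=1..N. (z - of_nat n) / (z + of_nat n)) * g z)"
proof (induction N)
  case 0
  then show ?case
    using hol bd by (intro exI[of _ h]) auto
next
  case (Suc N)
  then obtain g where ghol: "g holomorphic_on right_half_plane"
    and gb: "\<forall>z\<in>right_half_plane. norm (g z) \<le> 1"
    and geq: "\<forall>z\<in>right_half_plane. h z = (\<Prod>n=1..N. (z - of_nat n) / (z + of_nat n)) * g z"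
    by force
  define a where "a = real (Suc N)"
  have a: "0 < a" "complex_of_real a \<in> right_half_plane"
    by (simp_all add: a_def right_half_plane_def)
  have "(complex_of_real a - of_nat n) / (complex_of_real a + of_nat n) \<noteq> 0" if "n \<in> {1..N}" for n
  proof -
    have "complex_of_real a - of_nat n = of_real (a - real n)"
      and "complex_of_real a + of_nat n = of_real (a + real n)"
      by simp_all
    then show ?thesis
      using that by (simp add: a_def del: of_real_diff of_real_add)
  qed
  then have "(\<Prod>n=1..N. (complex_of_real a - of_nat n) / (complex_of_real a + of_nat n)) \<noteq> 0"
    by (simp add: prod_zero_iff)
  moreover have "h (complex_of_real a) = 0"
    using Suc.prems[of "Suc N"] by (simp add: a_def)
  ultimately have "g (complex_of_real a) = 0"
    using geq a by simp
  then obtain g' where "g' holomorphic_on right_half_plane"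
    "\<And>z. z \<in> right_half_plane \<Longrightarrow> norm (g' z) \<le> 1"
    "\<And>z. z \<in> right_half_plane \<Longrightarrow> g z = (z - of_real a) / (z + of_real a) * g' z"
    using divide_blaschke_factor[OF ghol _ a(1)] gb by blast
  moreover have "complex_of_real a = of_nat (Suc N)"
    by (simp add: a_def)
  ultimately show ?case
    using geq by (intro exI[of _ g']) (auto simp: mult_ac)
qed

lemma norm_blaschke_factor_le:
  fixes x :: real and n :: nat
  assumes x: "0 < x" and n: "1 \<le> n"
  shows "norm ((complex_of_real x - of_nat n) / (complex_of_real x + of_nat n))
           \<le> exp (- (2 * min x 1 / (x + 1)) / real n)"
proof -
  define c where "c = min x 1"
  have c: "0 < c" "c \<le> x" "c \<le> 1"
    using x by (auto simp: c_def)
  have xn: "0 < x + real n"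
    using x by simp
  have "complex_of_real x - of_nat n = of_real (x - real n)"
    and "complex_of_real x + of_nat n = of_real (x + real n)"
    by simp_all
  then have "norm ((complex_of_real x - of_nat n) / (complex_of_real x + of_nat n))
      = \<bar>x - real n\<bar> / (x + real n)"
    using xn by (simp add: norm_divide del: of_real_diff of_real_add)
  also have "\<dots> = 1 - 2 * min x (real n) / (x + real n)"
    using xn by (simp add: min_def abs_if field_simps)
  also have "\<dots> \<le> 1 - 2 * c / (x + real n)"
    using c n xn by (intro diff_left_mono divide_right_mono) (auto simp: c_def)
  also have "\<dots> \<le> exp (- (2 * c / (x + real n)))"
    using exp_ge_add_one_self[of "- (2 * c / (x + real n))"] by simp
  also have "\<dots> \<le> exp (- (2 * c / (x + 1)) / real n)"
  proof -
    have "x + real n \<le> (x + 1) * real n"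
      using n x by (simp add: algebra_simps)
    then have "2 * c / ((x + 1) * real n) \<le> 2 * c / (x + real n)"
      using c xn by (intro divide_left_mono) auto
    then show ?thesis
      by (simp add: field_simps)
  qed
  finally show ?thesis
    by (simp add: c_def)
qed

lemma norm_blaschke_product_le:
  fixes x :: real
  assumes x: "0 < x"
  shows "norm (\<Prod>n=1..N. (complex_of_real x - of_nat n) / (complex_of_real x + of_nat n))
           \<le> exp (- (2 * min x 1 / (x + 1)) * harm N)"
proof -
  define k where "k = 2 * min x 1 / (x + 1)"
  have "norm (\<Prod>n=1..N. (complex_of_real x - of_nat n) / (complex_of_real x + of_nat n))
        = (\<Prod>n=1..N. norm ((complex_of_real x - of_nat n) / (complex_of_real x + of_nat n)))"
    by (simp add: prod_norm)
  also have "\<dots> \<le> (\<Prod>n=1..N. exp (- k / real n))"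
    using norm_blaschke_factor_le[OF x] by (intro prod_mono) (auto simp: k_def)
  also have "\<dots> = exp (- k * harm N)"
    by (simp add: exp_sum harm_def sum_distrib_left divide_inverse)
  finally show ?thesis
    by (simp add: k_def)
qed

lemma bounded_holomorphic_nat_zeros_imp_zero:
  assumes hol: "h holomorphic_on right_half_plane"
    and bd: "\<And>z. z \<in> right_half_plane \<Longrightarrow> norm (h z) \<le> 1"
    and zeros: "\<And>n. 1 \<le> n \<Longrightarrow> h (of_nat n) = 0" and x: "0 < x"
  shows "h (complex_of_real x) = 0"
proof -
  define k where "k = 2 * min x 1 / (x + 1)"
  have k: "0 < k"
    using x by (simp add: k_def)
  have x_in: "complex_of_real x \<in> right_half_plane"
    using x by (simp add: right_half_plane_def)
  have bound: "norm (h (complex_of_real x)) \<le> exp (- k * harm N)" for N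
  proof -
    obtain g where gb: "\<forall>z\<in>right_half_plane. norm (g z) \<le> 1"
      and geq: "\<forall>z\<in>right_half_plane. h z = (\<Prod>n=1..N. (z - of_nat n) / (z + of_nat n)) * g z"
      using divide_blaschke_product[OF hol bd, of N] zeros by blast
    have "norm (h (complex_of_real x))
        = norm (\<Prod>n=1..N. (complex_of_real x - of_nat n) / (complex_of_real x + of_nat n))
            * norm (g (complex_of_real x))"
      using geq x_in by (simp add: norm_mult)
    also have "\<dots> \<le> norm (\<Prod>n=1..N. (complex_of_real x - of_nat n) / (complex_of_real x + of_nat n))"
      using gb x_in by (intro mult_left_le) auto
    also have "\<dots> \<le> exp (- k * harm N)"
      using norm_blaschke_product_le[OF x, of N] by (simp add: k_def)
    finally show ?thesis .
  qed
  have "filterlim (\<lambda>N. k * harm N) at_top sequentially"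
    by (rule filterlim_tendsto_pos_mult_at_top[OF tendsto_const k harm_at_top])
  then have "(\<lambda>N. exp (- k * harm N)) \<longlonglongrightarrow> 0"
    using filterlim_compose[OF exp_at_bot] by (simp add: filterlim_uminus_at_top)
  then have "norm (h (complex_of_real x)) \<le> 0"
    using LIMSEQ_le_const[of _ 0 "norm (h (complex_of_real x))"] bound by blast
  then show ?thesis
    by simp
qed

section \<open>Complex powers and differentiation under the integral\<close>

(* t^z for real t >= 0, spelled out instead of complex powr so that it is visibly
   Borel measurable in t. *)
definition cpow :: "complex \<Rightarrow> real \<Rightarrow> complex" where
  "cpow z t = (if 0 < t then exp (z * of_real (ln t)) else 0)"

definition ckern :: "complex \<Rightarrow> real \<Rightarrow> complex" where
  "ckern w t = (if t = 1 then w else (1 - cpow w t) / (1 - of_real t))"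

definition ckern_deriv :: "complex \<Rightarrow> real \<Rightarrow> complex" where
  "ckern_deriv w t = (if t = 1 then 1 else - (of_real (ln t) * cpow w t) / (1 - of_real t))"

lemma cpow_measurable [measurable]: "cpow z \<in> borel_measurable borel"
  unfolding cpow_def by measurable

lemma ckern_measurable [measurable]: "ckern w \<in> borel_measurable borel"
  unfolding ckern_def by measurable

lemma ckern_deriv_measurable [measurable]: "ckern_deriv w \<in> borel_measurable borel"
  unfolding ckern_deriv_def by measurable

lemma kern_measurable [measurable]: "kern s \<in> borel_measurable borel"
  unfolding kern_def by measurable

lemma norm_cpow: "0 < t \<Longrightarrow> norm (cpow z t) = exp (Re z * ln t)"
  by (simp add: cpow_def norm_exp_eq_Re)

lemma norm_cpow_le_1:
  assumes "0 \<le> t" "t \<le> 1" "0 \<le> Re z"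
  shows "norm (cpow z t) \<le> 1"
proof (cases "0 < t")
  case True
  then have "Re z * ln t \<le> 0"
    using assms by (simp add: mult_nonneg_nonpos)
  then show ?thesis
    using norm_cpow[OF True] by simp
qed (simp add: cpow_def)

lemma cpow_of_real: "0 \<le> t \<Longrightarrow> cpow (of_real s) t = of_real (t powr s)"
  by (auto simp: cpow_def powr_def exp_of_real[symmetric] mult.commute)

lemma ckern_of_real: "0 \<le> t \<Longrightarrow> ckern (of_real s) t = of_real (kern s t)"
  by (simp add: ckern_def kern_def cpow_of_real)

lemma norm_one_minus_of_real: "norm (1 - complex_of_real t) = \<bar>1 - t\<bar>"
  by (metis norm_of_real of_real_1 of_real_diff)

lemma mult_exp_neg_le:
  fixes u b :: real
  assumes "0 \<le> u" "0 < b"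
  shows "u * exp (- b * u) \<le> 1 / b"
proof -
  have "b * u \<le> exp (b * u)"
    using exp_ge_add_one_self[of "b * u"] by linarith
  then show ?thesis
    using assms by (simp add: exp_minus field_simps)
qed

lemma minus_ln_div_le:
  fixes t :: real
  assumes "0 < t" "t < 1"
  shows "- ln t / (1 - t) \<le> 1 / t"
  using ln_le_minus_one[of "1 / t"] assms by (simp add: ln_div field_simps)

lemma norm_exp_minus_1_le:
  fixes v :: complex
  assumes "Re v \<le> 0"
  shows "norm (exp v - 1) \<le> norm v"
proof -
  have "norm (exp v - exp 0) \<le> 1 * norm (v - 0)"
  proof (rule field_differentiable_bound[where S = "closed_segment 0 v" and f' = exp])
    show "(exp has_field_derivative exp z) (at z within closed_segment 0 v)" for z
      by (rule DERIV_subset[OF DERIV_exp]) simp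
    show "norm (exp z) \<le> 1" if z: "z \<in> closed_segment 0 v" for z
    proof -
      obtain u where "z = u *\<^sub>R v" "0 \<le> u"
        using z by (auto simp: closed_segment_def)
      then show ?thesis
        using assms by (simp add: norm_exp_eq_Re mult_nonneg_nonpos)
    qed
  qed auto
  then show ?thesis
    by simp
qed

lemma norm_exp_minus_1_minus_le:
  fixes v :: complex
  shows "norm (exp v - 1 - v) \<le> norm v ^ 2 * exp (norm v)"
proof -
  have "norm (exp z - 1) \<le> norm z * exp (norm z)" for z :: complex
  proof -
    have "norm (exp z - exp 0) \<le> exp (norm z) * norm (z - 0)"
    proof (rule field_differentiable_bound[where S = "closed_segment 0 z" and f' = exp])
      show "(exp has_field_derivative exp y) (at y within closed_segment 0 z)" for y
        by (rule DERIV_subset[OF DERIV_exp]) simp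
      show "norm (exp y) \<le> exp (norm z)" if "y \<in> closed_segment 0 z" for y
        using norm_exp[of y] segment_bound1[OF that] by simp
    qed auto
    then show ?thesis
      by (simp add: mult.commute)
  qed
  moreover have "norm z * exp (norm z) \<le> norm v * exp (norm v)" if "z \<in> closed_segment 0 v" for z
    using segment_bound1[OF that] by (intro mult_mono) auto
  ultimately have "norm (exp z - 1) \<le> norm v * exp (norm v)" if "z \<in> closed_segment 0 v" for z
    using that order_trans by blast
  then have "norm ((exp v - 1 - v) - (exp 0 - 1 - 0)) \<le> (norm v * exp (norm v)) * norm (v - 0)"
    by (intro field_differentiable_bound[where S = "closed_segment 0 v" and f' = "\<lambda>z. exp z - 1"])
      (auto intro!: derivative_eq_intros)
  then show ?thesis
    by (simp add: power2_eq_square mult_ac)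
qed

lemma norm_cpow_remainder_le:
  fixes z z\<^sub>0 :: complex and t :: real
  assumes t: "0 < t" "t \<le> 1"
  shows "norm (cpow z t - cpow z\<^sub>0 t - (z - z\<^sub>0) * (of_real (ln t) * cpow z\<^sub>0 t))
           \<le> norm (z - z\<^sub>0) ^ 2 * ((- ln t) ^ 2 * exp (- (Re z\<^sub>0 - norm (z - z\<^sub>0)) * - ln t))"
proof -
  define v where "v = (z - z\<^sub>0) * of_real (ln t)"
  have norm_v: "norm v = norm (z - z\<^sub>0) * - ln t"
    using t by (simp add: v_def norm_mult)
  have "cpow z t - cpow z\<^sub>0 t - (z - z\<^sub>0) * (of_real (ln t) * cpow z\<^sub>0 t) = cpow z\<^sub>0 t * (exp v - 1 - v)"
    using t by (simp add: cpow_def v_def exp_add[symmetric] algebra_simps)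
  then have "norm (cpow z t - cpow z\<^sub>0 t - (z - z\<^sub>0) * (of_real (ln t) * cpow z\<^sub>0 t))
      = exp (Re z\<^sub>0 * ln t) * norm (exp v - 1 - v)"
    using t by (simp add: norm_mult norm_cpow)
  also have "\<dots> \<le> exp (Re z\<^sub>0 * ln t) * (norm v ^ 2 * exp (norm v))"
    by (intro mult_left_mono norm_exp_minus_1_minus_le) simp
  also have "\<dots> = norm (z - z\<^sub>0) ^ 2 * ((- ln t) ^ 2 * exp (- (Re z\<^sub>0 - norm (z - z\<^sub>0)) * - ln t))"
    unfolding norm_v by (simp add: power_mult_distrib algebra_simps exp_add[symmetric])
  finally show ?thesis .
qed

lemma norm_cpow_remainder_le_quadratic:
  fixes z z\<^sub>0 :: complex and t :: real
  assumes t: "0 \<le> t" "t \<le> 1" and z\<^sub>0: "0 < Re z\<^sub>0" and z: "norm (z - z\<^sub>0) \<le> Re z\<^sub>0 / 2"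
  shows "norm (cpow z t - cpow z\<^sub>0 t - (z - z\<^sub>0) * (of_real (ln t) * cpow z\<^sub>0 t))
           \<le> 16 / (Re z\<^sub>0) ^ 2 * norm (z - z\<^sub>0) ^ 2"
proof (cases "0 < t")
  case False
  then show ?thesis
    by (simp add: cpow_def)
next
  case True
  define u where "u = - ln t"
  have u: "0 \<le> u"
    using t True by (simp add: u_def)
  have "- (Re z\<^sub>0 - norm (z - z\<^sub>0)) * u \<le> - (Re z\<^sub>0 / 2) * u"
    using z u by (intro mult_right_mono) auto
  then have "u ^ 2 * exp (- (Re z\<^sub>0 - norm (z - z\<^sub>0)) * u) \<le> u ^ 2 * exp (- (Re z\<^sub>0 / 2) * u)"
    by (intro mult_left_mono) auto
  also have "\<dots> = (u * exp (- (Re z\<^sub>0 / 4) * u)) ^ 2"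
    by (simp add: power2_eq_square exp_add[symmetric] algebra_simps)
  also have "\<dots> \<le> (1 / (Re z\<^sub>0 / 4)) ^ 2"
    using mult_exp_neg_le[OF u, of "Re z\<^sub>0 / 4"] z\<^sub>0 u by (intro power_mono) auto
  also have "\<dots> = 16 / (Re z\<^sub>0) ^ 2"
    by (simp add: power2_eq_square field_simps)
  finally have "u ^ 2 * exp (- (Re z\<^sub>0 - norm (z - z\<^sub>0)) * u) \<le> 16 / (Re z\<^sub>0) ^ 2" .
  then have "norm (z - z\<^sub>0) ^ 2 * (u ^ 2 * exp (- (Re z\<^sub>0 - norm (z - z\<^sub>0)) * u))
      \<le> norm (z - z\<^sub>0) ^ 2 * (16 / (Re z\<^sub>0) ^ 2)"
    by (intro mult_left_mono) auto
  then show ?thesis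
    using norm_cpow_remainder_le[OF True t(2), of z z\<^sub>0] by (simp add: u_def mult.commute)
qed

lemma norm_cpow_deriv_le:
  assumes "0 \<le> t" "t \<le> 1" "0 < Re z"
  shows "norm (of_real (ln t) * cpow z t) \<le> 1 / Re z"
proof (cases "0 < t")
  case True
  then have "norm (of_real (ln t) * cpow z t) = - ln t * exp (- Re z * - ln t)"
    using assms by (simp add: norm_mult norm_cpow)
  also have "\<dots> \<le> 1 / Re z"
    using True assms by (intro mult_exp_neg_le) auto
  finally show ?thesis .
qed (use assms in \<open>simp add: cpow_def\<close>)

lemma norm_one_minus_cpow_le:
  assumes "0 < t" "t \<le> 1" "0 \<le> Re w"
  shows "norm (1 - cpow w t) \<le> norm w * - ln t"
proof -
  have "norm (1 - cpow w t) = norm (exp (w * of_real (ln t)) - 1)"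
    using assms by (simp add: cpow_def norm_minus_commute)
  also have "\<dots> \<le> norm (w * of_real (ln t))"
    using assms by (intro norm_exp_minus_1_le) (simp add: mult_nonneg_nonpos)
  finally show ?thesis
    using assms by (simp add: norm_mult)
qed

lemma norm_ckern_le:
  assumes t: "0 \<le> t" "t \<le> 1" and w: "0 \<le> Re w"
  shows "norm (ckern w t) \<le> 4 + 2 * norm w"
proof -
  consider "t = 1" | "t \<le> 1 / 2" | "1 / 2 < t" "t < 1"
    using t by linarith
  then show ?thesis
  proof cases
    case 1
    then show ?thesis
      by (simp add: ckern_def)
  next
    case 2
    have "norm (1 - cpow w t) \<le> 2"
      using norm_triangle_ineq4[of 1 "cpow w t"] norm_cpow_le_1[OF t w] by simp
    then have "norm (ckern w t) \<le> 4"
      using 2 by (simp add: ckern_def norm_divide norm_one_minus_of_real divide_le_eq)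
    then show ?thesis
      using norm_ge_zero[of w] by linarith
  next
    case 3
    have "norm (ckern w t) = norm (1 - cpow w t) / (1 - t)"
      using 3 by (simp add: ckern_def norm_divide norm_one_minus_of_real)
    also have "\<dots> \<le> norm w * - ln t / (1 - t)"
      using norm_one_minus_cpow_le[of t w] 3 w by (intro divide_right_mono) auto
    also have "\<dots> = norm w * (- ln t / (1 - t))"
      by simp
    also have "\<dots> \<le> norm w * 2"
    proof -
      have "1 / t \<le> 2"
        using 3 by (simp add: field_simps)
      then show ?thesis
        using minus_ln_div_le[of t] 3 by (intro mult_left_mono) auto
    qed
    finally show ?thesis
      by simp
  qed
qed

lemma ckern_remainder_eq:
  assumes "0 < t" "t < 1"
  shows "ckern w t - ckern w\<^sub>0 t - (w - w\<^sub>0) * ckern_deriv w\<^sub>0 t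
           = - (cpow w t - cpow w\<^sub>0 t - (w - w\<^sub>0) * (of_real (ln t) * cpow w\<^sub>0 t)) / (1 - of_real t)"
proof -
  have "1 - complex_of_real t \<noteq> 0"
  proof -
    have "complex_of_real t \<noteq> 1"
      using assms by simp
    then show ?thesis
      by simp
  qed
  moreover have "(1 - a) / d - (1 - b) / d - c * (- e / d) = - (a - b - c * e) / d"
    if "d \<noteq> 0" for a b c d e :: complex
    using that by (simp add: field_simps)
  ultimately show ?thesis
    using assms by (simp add: ckern_def ckern_deriv_def)
qed

lemma norm_ckern_remainder_le:
  fixes w w\<^sub>0 :: complex and t :: real
  assumes t: "0 \<le> t" "t \<le> 1" and w\<^sub>0: "1 < Re w\<^sub>0" and w: "norm (w - w\<^sub>0) \<le> (Re w\<^sub>0 - 1) / 2"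
  shows "norm (ckern w t - ckern w\<^sub>0 t - (w - w\<^sub>0) * ckern_deriv w\<^sub>0 t)
           \<le> 2 / (Re w\<^sub>0 - 1) * norm (w - w\<^sub>0) ^ 2"
proof -
  consider "t = 1" | "t = 0" | "0 < t" "t < 1"
    using t by linarith
  then show ?thesis
  proof cases
    case 3
    define u d b where "u = - ln t" and "d = norm (w - w\<^sub>0)" and "b = (Re w\<^sub>0 - 1) / 2"
    have u: "0 \<le> u" and b: "0 < b" and "d \<le> b"
      using 3 w\<^sub>0 w by (simp_all add: u_def b_def d_def)
    have "norm (ckern w t - ckern w\<^sub>0 t - (w - w\<^sub>0) * ckern_deriv w\<^sub>0 t)
        = norm (cpow w t - cpow w\<^sub>0 t - (w - w\<^sub>0) * (of_real (ln t) * cpow w\<^sub>0 t)) / (1 - t)"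
      using 3 by (simp add: ckern_remainder_eq norm_divide norm_one_minus_of_real norm_minus_commute)
    also have "\<dots> \<le> d ^ 2 * (u ^ 2 * exp (- (Re w\<^sub>0 - d) * u)) / (1 - t)"
      using norm_cpow_remainder_le[of t w w\<^sub>0] 3 by (intro divide_right_mono) (auto simp: u_def d_def)
    also have "\<dots> = d ^ 2 * (u / (1 - t)) * (u * exp (- (Re w\<^sub>0 - d) * u))"
      by (simp add: power2_eq_square)
    also have "\<dots> \<le> d ^ 2 * exp u * (u * exp (- (Re w\<^sub>0 - d) * u))"
    proof -
      have "u / (1 - t) \<le> exp u"
        using minus_ln_div_le[OF 3] 3 by (simp add: u_def exp_minus inverse_eq_divide)
      then show ?thesis
        by (intro mult_right_mono mult_left_mono) (use u in auto)
    qed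
    also have "\<dots> = d ^ 2 * (u * exp (- (Re w\<^sub>0 - 1 - d) * u))"
      by (simp add: algebra_simps exp_add[symmetric])
    also have "\<dots> \<le> d ^ 2 * (u * exp (- b * u))"
    proof -
      have "- (Re w\<^sub>0 - 1 - d) * u \<le> - b * u"
        using \<open>d \<le> b\<close> u by (intro mult_right_mono) (auto simp: b_def field_simps)
      then show ?thesis
        using u by (intro mult_left_mono) auto
    qed
    also have "\<dots> \<le> d ^ 2 * (1 / b)"
      using mult_exp_neg_le[OF u b] by (intro mult_left_mono) auto
    finally show ?thesis
      by (simp add: b_def d_def mult.commute)
  qed (use w\<^sub>0 in \<open>simp_all add: ckern_def ckern_deriv_def cpow_def\<close>)
qed

lemma norm_ckern_deriv_le:
  assumes t: "0 \<le> t" "t \<le> 1" and w\<^sub>0: "1 \<le> Re w\<^sub>0"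
  shows "norm (ckern_deriv w\<^sub>0 t) \<le> 1"
proof -
  consider "t = 1" | "t = 0" | "0 < t" "t < 1"
    using t by linarith
  then show ?thesis
  proof cases
    case 3
    have "norm (ckern_deriv w\<^sub>0 t) = (- ln t / (1 - t)) * exp (Re w\<^sub>0 * ln t)"
      using 3 by (simp add: ckern_deriv_def norm_divide norm_mult norm_cpow norm_one_minus_of_real)
    also have "\<dots> \<le> (1 / t) * exp (Re w\<^sub>0 * ln t)"
      using minus_ln_div_le[OF 3] by (intro mult_right_mono) auto
    also have "\<dots> = exp ((Re w\<^sub>0 - 1) * ln t)"
      using 3 by (simp add: exp_diff left_diff_distrib)
    also have "\<dots> \<le> 1"
      using w\<^sub>0 3 by (simp add: mult_nonneg_nonpos)
    finally show ?thesis .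
  qed (simp_all add: ckern_deriv_def)
qed

lemma has_field_derivative_quadratic_remainder:
  fixes f :: "'a::real_normed_field \<Rightarrow> 'a"
  assumes \<delta>: "0 < \<delta>"
    and remainder: "\<And>z. z \<in> ball z\<^sub>0 \<delta> \<Longrightarrow> norm (f z - f z\<^sub>0 - (z - z\<^sub>0) * D) \<le> C * norm (z - z\<^sub>0) ^ 2"
  shows "(f has_field_derivative D) (at z\<^sub>0)"
proof -
  have "z\<^sub>0 \<in> ball z\<^sub>0 \<delta>"
    using \<delta> by simp
  then have near: "eventually (\<lambda>z. z \<in> ball z\<^sub>0 \<delta> - {z\<^sub>0}) (at z\<^sub>0)"
    by (rule eventually_at_in_open[OF open_ball])
  have "((\<lambda>z. (f z - f z\<^sub>0) / (z - z\<^sub>0) - D) \<longlongrightarrow> 0) (at z\<^sub>0)"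
  proof (rule Lim_null_comparison)
    show "eventually (\<lambda>z. norm ((f z - f z\<^sub>0) / (z - z\<^sub>0) - D) \<le> \<bar>C\<bar> * norm (z - z\<^sub>0)) (at z\<^sub>0)"
      using near
    proof eventually_elim
      case (elim z)
      then have z: "z \<in> ball z\<^sub>0 \<delta>" "z - z\<^sub>0 \<noteq> 0"
        by auto
      have "norm ((f z - f z\<^sub>0) / (z - z\<^sub>0) - D) = norm (f z - f z\<^sub>0 - (z - z\<^sub>0) * D) / norm (z - z\<^sub>0)"
        using z by (simp add: norm_divide[symmetric] field_simps)
      also have "\<dots> \<le> C * norm (z - z\<^sub>0) ^ 2 / norm (z - z\<^sub>0)"
        using remainder[OF z(1)] by (intro divide_right_mono) auto
      also have "\<dots> \<le> \<bar>C\<bar> * norm (z - z\<^sub>0)"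
        using z by (simp add: power2_eq_square mult_right_mono)
      finally show ?case .
    qed
    show "((\<lambda>z. \<bar>C\<bar> * norm (z - z\<^sub>0)) \<longlongrightarrow> 0) (at z\<^sub>0)"
      by (auto intro!: tendsto_eq_intros)
  qed
  then show ?thesis
    unfolding has_field_derivative_iff by (rule LIM_zero_cancel)
qed

lemma Re_gt_of_mem_ball: "z \<in> ball z\<^sub>0 r \<Longrightarrow> Re z\<^sub>0 - r < Re z"
  using complex_Re_le_cmod[of "z\<^sub>0 - z"] by (simp add: dist_norm)

lemma (in prob_space) has_field_derivative_integral:
  fixes K :: "complex \<Rightarrow> 'a \<Rightarrow> complex"
  assumes \<delta>: "0 < \<delta>"
    and int: "\<And>z. z \<in> ball z\<^sub>0 \<delta> \<Longrightarrow> integrable M (K z)" and int': "integrable M K'"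
    and remainder: "\<And>z. z \<in> ball z\<^sub>0 \<delta> \<Longrightarrow>
          AE t in M. norm (K z t - K z\<^sub>0 t - (z - z\<^sub>0) * K' t) \<le> C * norm (z - z\<^sub>0) ^ 2"
  shows "((\<lambda>z. \<integral>t. K z t \<partial>M) has_field_derivative (\<integral>t. K' t \<partial>M)) (at z\<^sub>0)"
proof (rule has_field_derivative_quadratic_remainder[OF \<delta>])
  fix z
  assume z: "z \<in> ball z\<^sub>0 \<delta>"
  have z\<^sub>0: "z\<^sub>0 \<in> ball z\<^sub>0 \<delta>"
    using \<delta> by simp
  have "(\<integral>t. K z t \<partial>M) - (\<integral>t. K z\<^sub>0 t \<partial>M) - (z - z\<^sub>0) * (\<integral>t. K' t \<partial>M)
      = (\<integral>t. K z t - K z\<^sub>0 t - (z - z\<^sub>0) * K' t \<partial>M)"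
    using int[OF z] int[OF z\<^sub>0] int' by simp
  also have "norm \<dots> \<le> (\<integral>t. norm (K z t - K z\<^sub>0 t - (z - z\<^sub>0) * K' t) \<partial>M)"
    by (rule integral_norm_bound)
  also have "\<dots> \<le> (\<integral>t. C * norm (z - z\<^sub>0) ^ 2 \<partial>M)"
    using remainder[OF z] int[OF z] int[OF z\<^sub>0] int' by (intro integral_mono_AE) auto
  also have "\<dots> = C * norm (z - z\<^sub>0) ^ 2"
    by (simp add: prob_space)
  finally show "norm ((\<integral>t. K z t \<partial>M) - (\<integral>t. K z\<^sub>0 t \<partial>M) - (z - z\<^sub>0) * (\<integral>t. K' t \<partial>M))
      \<le> C * norm (z - z\<^sub>0) ^ 2" .
qed

section \<open>The function f\<close>

lemma kern_pos:
  assumes "0 \<le> t" "t \<le> 1" "0 < s"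
  shows "0 < kern s t"
proof (cases "t = 1")
  case False
  then have "t powr s < 1 powr s"
    using assms by (intro powr_less_mono2) auto
  then show ?thesis
    using assms False by (simp add: kern_def)
qed (use assms in \<open>simp add: kern_def\<close>)

lemma kern_add_1:
  assumes "0 \<le> t"
  shows "kern (s + 1) t = kern s t + t powr s"
proof (cases "t = 1")
  case False
  have "t powr (s + 1) = t powr s * t"
    using assms by (cases "t = 0") (simp_all add: powr_add)
  then show ?thesis
    using False by (simp add: kern_def field_simps)
qed (simp add: kern_def)

lemma kern_nat:
  assumes "0 \<le> t"
  shows "kern (real n + 1) t = (\<Sum>k\<le>n. t ^ k)"
proof (cases "t = 1")
  case False
  have "t powr real (Suc n) = t ^ Suc n"
    using assms powr_realpow[of t "Suc n"] by (cases "t = 0") auto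
  then have "t powr (real n + 1) = t ^ Suc n"
    by (simp add: add.commute)
  moreover have "(\<Sum>k<Suc n. t ^ k) = (1 - t ^ Suc n) / (1 - t)"
    using False by (simp only: sum_gp_strict) simp
  ultimately show ?thesis
    using False by (simp add: kern_def lessThan_Suc_atMost)
qed (simp add: kern_def)

lemma concave_on_kern:
  assumes t: "0 \<le> t" "t \<le> 1"
  shows "concave_on UNIV (\<lambda>s. kern s t)"
proof (rule concave_on_linorderI)
  fix u x y :: real
  assume u: "0 < u" "u < 1"
  consider "t = 1" | "t = 0" | "0 < t" "t < 1"
    using t by linarith
  then show "(1 - u) * kern x t + u * kern y t \<le> kern ((1 - u) *\<^sub>R x + u *\<^sub>R y) t"
  proof cases
    case 3
    define L where "L = ln t"
    have kern_exp: "kern r t = (1 - exp (r * L)) / (1 - t)" for r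
      using 3 by (simp add: kern_def powr_def L_def mult.commute)
    have "exp (((1 - u) * x + u * y) * L) \<le> (1 - u) * exp (x * L) + u * exp (y * L)"
      using convex_onD[OF exp_convex, of u "x * L" "y * L"] u by (simp add: algebra_simps)
    then have "(1 - ((1 - u) * exp (x * L) + u * exp (y * L))) / (1 - t)
        \<le> (1 - exp (((1 - u) * x + u * y) * L)) / (1 - t)"
      using 3 by (intro divide_right_mono) auto
    moreover have "(1 - u) * kern x t + u * kern y t
        = (1 - ((1 - u) * exp (x * L) + u * exp (y * L))) / (1 - t)"
      using 3 by (simp add: kern_exp add_divide_distrib diff_divide_distrib algebra_simps)
    ultimately show ?thesis
      by (simp add: kern_exp)
  qed (simp_all add: kern_def algebra_simps)
qed simp

lemma convex_on_ln_inverse: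
  assumes f: "concave_on S f" and pos: "\<And>x. x \<in> S \<Longrightarrow> 0 < f x"
  shows "convex_on S (\<lambda>x. ln (1 / f x))"
proof (rule convex_onI)
  show S: "convex S"
    by (rule concave_on_imp_convex[OF f])
  fix u :: real and x y
  assume u: "0 < u" "u < 1" and x: "x \<in> S" and y: "y \<in> S"
  have "(1 - u) *\<^sub>R x + u *\<^sub>R y \<in> S"
    using convexD[OF S x y] u by simp
  then have pos_comb: "0 < f ((1 - u) *\<^sub>R x + u *\<^sub>R y)"
    by (rule pos)
  have "(1 - u) * ln (f x) + u * ln (f y) \<le> ln ((1 - u) * f x + u * f y)"
    using concave_onD[OF ln_concave, of u "f x" "f y"] u pos[OF x] pos[OF y] by simp
  also have "\<dots> \<le> ln (f ((1 - u) *\<^sub>R x + u *\<^sub>R y))"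
    using concave_onD[OF f, of u x y] u x y pos[OF x] pos[OF y] pos_comb
    by (subst ln_le_cancel_iff) (auto intro: add_pos_pos)
  finally show "ln (1 / f ((1 - u) *\<^sub>R x + u *\<^sub>R y)) \<le> (1 - u) * ln (1 / f x) + u * ln (1 / f y)"
    using pos[OF x] pos[OF y] pos_comb by (simp add: ln_div)
qed

locale moment_measure_space =
  fixes M :: "real measure"
  assumes moment_measure: "moment_measure M"
begin

sublocale prob_space M
  using moment_measure by (simp add: moment_measure_def)

lemma sets_M [measurable_cong]: "sets M = sets borel"
  using moment_measure by (simp add: moment_measure_def)

lemma AE_unit_interval: "AE t in M. 0 \<le> t \<and> t \<le> 1"
proof -
  have "prob {0..1} = 1"
    using moment_measure by (simp add: moment_measure_def emeasure_eq_measure)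
  then have "AE t in M. t \<in> {0..1}"
    using AE_in_set_eq_1[of "{0..1}"] by simp
  then show ?thesis
    by simp
qed

lemma AE_bounded:
  assumes "\<And>t. 0 \<le> t \<Longrightarrow> t \<le> 1 \<Longrightarrow> norm (f t) \<le> B"
  shows "AE t in M. norm (f t) \<le> B"
  using AE_unit_interval by eventually_elim (use assms in auto)

lemma integrable_bounded:
  fixes f :: "real \<Rightarrow> 'b::{banach,second_countable_topology}"
  assumes "f \<in> borel_measurable borel" "\<And>t. 0 \<le> t \<Longrightarrow> t \<le> 1 \<Longrightarrow> norm (f t) \<le> B"
  shows "integrable M f"
  by (rule integrable_const_bound[OF AE_bounded[OF assms(2)]]) (use assms(1) in measurable)

lemma norm_integral_le:
  fixes f :: "real \<Rightarrow> 'b::{banach,second_countable_topology}"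
  assumes "f \<in> borel_measurable borel" "\<And>t. 0 \<le> t \<Longrightarrow> t \<le> 1 \<Longrightarrow> norm (f t) \<le> B"
  shows "norm (\<integral>t. f t \<partial>M) \<le> B"
proof -
  have "norm (\<integral>t. f t \<partial>M) \<le> (\<integral>t. norm (f t) \<partial>M)"
    by (rule integral_norm_bound)
  also have "\<dots> \<le> (\<integral>t. B \<partial>M)"
    using AE_bounded[OF assms(2)] integrable_bounded[OF assms] by (intro integral_mono_AE) auto
  also have "\<dots> = B"
    by (simp add: prob_space)
  finally show ?thesis .
qed

definition cmoment :: "complex \<Rightarrow> complex" where
  "cmoment z = (\<integral>t. cpow z t \<partial>M)"

definition cffun :: "complex \<Rightarrow> complex" where
  "cffun w = (\<integral>t. ckern w t \<partial>M)"

definition moment :: "real \<Rightarrow> real" where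
  "moment s = (\<integral>t. t powr s \<partial>M)"

definition moment_defect :: "complex \<Rightarrow> complex" where
  "moment_defect z = cmoment z * cffun (z + 1) - 1"

lemma integrable_cpow: "0 \<le> Re z \<Longrightarrow> integrable M (cpow z)"
  by (rule integrable_bounded) (auto intro: norm_cpow_le_1)

lemma integrable_ckern: "0 \<le> Re w \<Longrightarrow> integrable M (ckern w)"
  by (rule integrable_bounded) (auto intro: norm_ckern_le)

lemma norm_cmoment_le: "0 \<le> Re z \<Longrightarrow> norm (cmoment z) \<le> 1"
  unfolding cmoment_def by (rule norm_integral_le) (auto intro: norm_cpow_le_1)

lemma norm_cffun_le: "0 \<le> Re w \<Longrightarrow> norm (cffun w) \<le> 4 + 2 * norm w"
  unfolding cffun_def by (rule norm_integral_le) (auto intro: norm_ckern_le)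

lemma cmoment_has_field_derivative:
  assumes z\<^sub>0: "0 < Re z\<^sub>0"
  shows "(cmoment has_field_derivative (\<integral>t. of_real (ln t) * cpow z\<^sub>0 t \<partial>M)) (at z\<^sub>0)"
  unfolding cmoment_def
proof (rule has_field_derivative_integral[where \<delta> = "Re z\<^sub>0 / 2" and C = "16 / (Re z\<^sub>0) ^ 2"])
  show "0 < Re z\<^sub>0 / 2"
    using z\<^sub>0 by simp
  show "integrable M (cpow z)" if "z \<in> ball z\<^sub>0 (Re z\<^sub>0 / 2)" for z
    using Re_gt_of_mem_ball[OF that] z\<^sub>0 by (intro integrable_cpow) simp
  show "integrable M (\<lambda>t. of_real (ln t) * cpow z\<^sub>0 t)"
    by (rule integrable_bounded) (use z\<^sub>0 in \<open>auto intro: norm_cpow_deriv_le\<close>)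
  show "AE t in M. norm (cpow z t - cpow z\<^sub>0 t - (z - z\<^sub>0) * (of_real (ln t) * cpow z\<^sub>0 t))
          \<le> 16 / (Re z\<^sub>0) ^ 2 * norm (z - z\<^sub>0) ^ 2" if "z \<in> ball z\<^sub>0 (Re z\<^sub>0 / 2)" for z
  proof -
    have "norm (z - z\<^sub>0) \<le> Re z\<^sub>0 / 2"
      using that by (simp add: dist_norm norm_minus_commute)
    then show ?thesis
      using z\<^sub>0 by (intro AE_bounded norm_cpow_remainder_le_quadratic) auto
  qed
qed

lemma cffun_has_field_derivative:
  assumes w\<^sub>0: "1 < Re w\<^sub>0"
  shows "(cffun has_field_derivative (\<integral>t. ckern_deriv w\<^sub>0 t \<partial>M)) (at w\<^sub>0)"
  unfolding cffun_def
proof (rule has_field_derivative_integral[where \<delta> = "(Re w\<^sub>0 - 1) / 2" and C = "2 / (Re w\<^sub>0 - 1)"])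
  show "0 < (Re w\<^sub>0 - 1) / 2"
    using w\<^sub>0 by simp
  show "integrable M (ckern w)" if "w \<in> ball w\<^sub>0 ((Re w\<^sub>0 - 1) / 2)" for w
  proof (rule integrable_ckern)
    show "0 \<le> Re w"
      using Re_gt_of_mem_ball[OF that] w\<^sub>0 by argo
  qed
  show "integrable M (ckern_deriv w\<^sub>0)"
    by (rule integrable_bounded) (use w\<^sub>0 in \<open>auto intro: norm_ckern_deriv_le\<close>)
  show "AE t in M. norm (ckern w t - ckern w\<^sub>0 t - (w - w\<^sub>0) * ckern_deriv w\<^sub>0 t)
          \<le> 2 / (Re w\<^sub>0 - 1) * norm (w - w\<^sub>0) ^ 2" if "w \<in> ball w\<^sub>0 ((Re w\<^sub>0 - 1) / 2)" for w
  proof -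
    have "norm (w - w\<^sub>0) \<le> (Re w\<^sub>0 - 1) / 2"
      using that by (simp add: dist_norm norm_minus_commute)
    then show ?thesis
      using w\<^sub>0 by (intro AE_bounded norm_ckern_remainder_le) auto
  qed
qed

lemma moment_defect_holomorphic: "moment_defect holomorphic_on right_half_plane"
proof -
  have "\<exists>D. (moment_defect has_field_derivative D) (at z)" if "z \<in> right_half_plane" for z
  proof -
    have z: "0 < Re z"
      using that by (simp add: right_half_plane_def)
    have "((\<lambda>y. cffun (y + 1)) has_field_derivative (\<integral>t. ckern_deriv (z + 1) t \<partial>M) * 1) (at z)"
      by (rule DERIV_chain2[OF cffun_has_field_derivative]) (use z in \<open>auto intro!: derivative_eq_intros\<close>)
    from DERIV_mult'[OF cmoment_has_field_derivative[OF z] this]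
    have "((\<lambda>y. cmoment y * cffun (y + 1) - 1) has_field_derivative
        cmoment z * ((\<integral>t. ckern_deriv (z + 1) t \<partial>M) * 1)
          + (\<integral>t. of_real (ln t) * cpow z t \<partial>M) * cffun (z + 1) - 0) (at z)"
      by (rule DERIV_diff[OF _ DERIV_const])
    then show ?thesis
      unfolding moment_defect_def[abs_def] by blast
  qed
  then show ?thesis
    using open_right_half_plane by (simp add: holomorphic_on_open)
qed

lemma norm_moment_defect_le:
  assumes "z \<in> right_half_plane"
  shows "norm (moment_defect z) \<le> 7 * norm (z + 1)"
proof -
  have z: "0 < Re z"
    using assms by (simp add: right_half_plane_def)
  have "1 \<le> norm (z + 1)"
    using complex_Re_le_cmod[of "z + 1"] z by simp
  have "norm (moment_defect z) \<le> norm (cmoment z) * norm (cffun (z + 1)) + 1"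
    unfolding moment_defect_def using norm_triangle_ineq4[of "cmoment z * cffun (z + 1)" 1]
    by (simp add: norm_mult)
  also have "\<dots> \<le> 1 * (4 + 2 * norm (z + 1)) + 1"
    using norm_cmoment_le[of z] norm_cffun_le[of "z + 1"] z by (intro add_right_mono mult_mono) auto
  also have "\<dots> \<le> 7 * norm (z + 1)"
    using \<open>1 \<le> norm (z + 1)\<close> by simp
  finally show ?thesis .
qed

lemma integrable_powr: "0 \<le> s \<Longrightarrow> integrable M (\<lambda>t. t powr s)"
  by (rule integrable_bounded[where B = 1]) (auto intro: powr_le1)

lemma integrable_kern: "0 \<le> s \<Longrightarrow> integrable M (kern s)"
proof -
  assume s: "0 \<le> s"
  have "AE t in M. ckern (of_real s) t = complex_of_real (kern s t)"
    using AE_unit_interval by eventually_elim (simp add: ckern_of_real)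
  then have "integrable M (ckern (of_real s)) = integrable M (\<lambda>t. complex_of_real (kern s t))"
    by (rule integrable_cong_AE[rotated 2]) measurable
  then have "integrable M (\<lambda>t. complex_of_real (kern s t))"
    using integrable_ckern[of "of_real s"] s by simp
  then show ?thesis
    by (simp add: complex_of_real_integrable_eq)
qed

lemma cmoment_of_real: "cmoment (of_real s) = of_real (moment s)"
proof -
  have "AE t in M. cpow (of_real s) t = complex_of_real (t powr s)"
    using AE_unit_interval by eventually_elim (simp add: cpow_of_real)
  then have "cmoment (of_real s) = (\<integral>t. complex_of_real (t powr s) \<partial>M)"
    unfolding cmoment_def by (rule integral_cong_AE[rotated 2]) measurable
  then show ?thesis
    by (simp add: moment_def)
qed

lemma cffun_of_real: "cffun (of_real s) = of_real (ffun M s)"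
proof -
  have "AE t in M. ckern (of_real s) t = complex_of_real (kern s t)"
    using AE_unit_interval by eventually_elim (simp add: ckern_of_real)
  then have "cffun (of_real s) = (\<integral>t. complex_of_real (kern s t) \<partial>M)"
    unfolding cffun_def by (rule integral_cong_AE[rotated 2]) measurable
  then show ?thesis
    by (simp add: ffun_def)
qed

lemma moment_nat: "1 \<le> n \<Longrightarrow> moment (real n) = mseq n"
proof -
  assume n: "1 \<le> n"
  have "AE t in M. t powr real n = t ^ n"
    using AE_unit_interval by eventually_elim (use n in \<open>auto simp: powr_realpow less_eq_real_def\<close>)
  then have "moment (real n) = (\<integral>t. t ^ n \<partial>M)"
    unfolding moment_def by (rule integral_cong_AE[rotated 2]) measurable
  then show ?thesis
    using moment_measure by (simp add: moment_measure_def)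
qed

lemma ffun_nat: "ffun M (real n + 1) = mseq_recip n"
proof -
  have "AE t in M. kern (real n + 1) t = (\<Sum>k\<le>n. t ^ k)"
    using AE_unit_interval by eventually_elim (simp add: kern_nat)
  then have "ffun M (real n + 1) = (\<integral>t. (\<Sum>k\<le>n. t ^ k) \<partial>M)"
    unfolding ffun_def by (rule integral_cong_AE[rotated 2]) measurable
  also have "\<dots> = (\<Sum>k\<le>n. mseq k)"
    using moment_measure by (simp add: moment_measure_def)
  also have "\<dots> = mseq_recip n"
    by (simp add: mseq_eq sum_inverse_mseq_recip)
  finally show ?thesis .
qed

lemma moment_defect_nat: "1 \<le> n \<Longrightarrow> moment_defect (of_nat n) = 0"
  using cmoment_of_real[of "real n"] cffun_of_real[of "real n + 1"] moment_nat[of n]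
    ffun_nat[of n] mseq_recip_pos[of n]
  by (simp add: moment_defect_def mseq_eq)

lemma moment_defect_of_real:
  "moment_defect (of_real s) = of_real (moment s * ffun M (s + 1) - 1)"
  using cmoment_of_real[of s] cffun_of_real[of "s + 1"] by (simp add: moment_defect_def)

lemma moment_mult_ffun:
  assumes s: "0 < s"
  shows "moment s * ffun M (s + 1) = 1"
proof -
  define h where "h z = moment_defect z / (7 * (z + 1))" for z
  have nz: "7 * (z + 1) \<noteq> 0" if "z \<in> right_half_plane" for z
    using that by (auto simp: right_half_plane_def complex_eq_iff)
  have "h holomorphic_on right_half_plane"
    unfolding h_def using moment_defect_holomorphic nz by (intro holomorphic_intros) auto
  moreover have "norm (h z) \<le> 1" if "z \<in> right_half_plane" for z
    using norm_moment_defect_le[OF that] nz[OF that]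
    by (simp add: h_def norm_divide norm_mult divide_le_eq_1 del: distrib_left_numeral)
  moreover have "h (of_nat n) = 0" if "1 \<le> n" for n
    using moment_defect_nat[OF that] by (simp add: h_def)
  ultimately have "h (of_real s) = 0"
    using bounded_holomorphic_nat_zeros_imp_zero s by blast
  moreover have "of_real s \<in> right_half_plane"
    using s by (simp add: right_half_plane_def)
  ultimately have "moment_defect (of_real s) = 0"
    using nz by (simp add: h_def del: distrib_left_numeral)
  then have "complex_of_real (moment s * ffun M (s + 1) - 1) = 0"
    by (simp only: moment_defect_of_real)
  then show ?thesis
    by (simp only: of_real_eq_0_iff right_minus_eq)
qed

lemma ffun_add_1: "0 \<le> s \<Longrightarrow> ffun M (s + 1) = ffun M s + moment s"
proof -
  assume s: "0 \<le> s"
  have "AE t in M. kern (s + 1) t = kern s t + t powr s"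
    using AE_unit_interval by eventually_elim (simp add: kern_add_1)
  then have "ffun M (s + 1) = (\<integral>t. kern s t + t powr s \<partial>M)"
    unfolding ffun_def by (rule integral_cong_AE[rotated 2]) measurable
  also have "\<dots> = ffun M s + moment s"
    unfolding ffun_def moment_def using integrable_kern[OF s] integrable_powr[OF s] by simp
  finally show ?thesis .
qed

lemma ffun_pos: "0 < s \<Longrightarrow> 0 < ffun M s"
proof -
  assume s: "0 < s"
  have pos: "AE t in M. 0 < kern s t"
    using AE_unit_interval by eventually_elim (use s in \<open>auto intro: kern_pos\<close>)
  then have nonneg: "AE t in M. 0 \<le> kern s t"
    by eventually_elim simp
  have "ffun M s \<noteq> 0"
  proof
    assume "ffun M s = 0"
    then have "AE t in M. kern s t = 0"
      unfolding ffun_def using integral_nonneg_eq_0_iff_AE[OF integrable_kern nonneg] s by simp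
    with pos have "AE t in M. False"
      by eventually_elim simp
    then show False
      by simp
  qed
  moreover have "0 \<le> ffun M s"
    unfolding ffun_def using nonneg by (rule integral_nonneg_AE)
  ultimately show ?thesis
    by simp
qed

lemma ffun_one: "ffun M 1 = 1"
proof -
  have "AE t in M. kern 1 t = 1"
    using AE_unit_interval by eventually_elim (auto simp: kern_def)
  then have "ffun M 1 = (\<integral>t. 1 \<partial>M)"
    unfolding ffun_def by (rule integral_cong_AE[rotated 2]) measurable
  then show ?thesis
    by (simp add: prob_space)
qed

lemma ffun_functional_eq: "0 < s \<Longrightarrow> ffun M s = ffun M (s + 1) - 1 / ffun M (s + 1)"
  using moment_mult_ffun[of s] ffun_add_1[of s] ffun_pos[of "s + 1"] by (simp add: field_simps)

lemma concave_on_ffun: "concave_on {0<..} (ffun M)"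
proof (rule concave_on_linorderI)
  fix u x y :: real
  assume u: "0 < u" "u < 1" and x: "x \<in> {0<..}" and y: "y \<in> {0<..}"
  have "(1 - u) * ffun M x + u * ffun M y = (\<integral>t. (1 - u) * kern x t + u * kern y t \<partial>M)"
    unfolding ffun_def using integrable_kern[of x] integrable_kern[of y] x y by simp
  also have "\<dots> \<le> (\<integral>t. kern ((1 - u) *\<^sub>R x + u *\<^sub>R y) t \<partial>M)"
  proof (rule integral_mono_AE)
    show "integrable M (\<lambda>t. (1 - u) * kern x t + u * kern y t)"
      using integrable_kern[of x] integrable_kern[of y] x y by simp
    show "integrable M (\<lambda>t. kern ((1 - u) *\<^sub>R x + u *\<^sub>R y) t)"
      using integrable_kern[of "(1 - u) * x + u * y"] u x y by simp
    show "AE t in M. (1 - u) * kern x t + u * kern y t \<le> kern ((1 - u) *\<^sub>R x + u *\<^sub>R y) t"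
      using AE_unit_interval
    proof eventually_elim
      case (elim t)
      then show ?case
        using concave_onD[OF concave_on_kern[of t], of u x y] u by simp
    qed
  qed
  finally show "(1 - u) * ffun M x + u * ffun M y \<le> ffun M ((1 - u) *\<^sub>R x + u *\<^sub>R y)"
    by (simp add: ffun_def)
qed (simp add: convex_real_interval)

lemma convex_on_ln_inverse_ffun: "convex_on {0<..} (\<lambda>s. ln (1 / ffun M s))"
  using convex_on_ln_inverse[OF concave_on_ffun] ffun_pos by simp

end

theorem theorem1p2:
  fixes M :: "real measure"
  assumes "moment_measure M"
  shows "(\<forall>s>0. ffun M s > 0) \<and> ffun M 1 = 1 \<and>
         convex_on {0<..} (\<lambda>s. ln (1 / ffun M s)) \<and>
         (\<forall>s>0. ffun M s = ffun M (s + 1) - 1 / ffun M (s + 1)) \<and>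
         (\<forall>g :: real \<Rightarrow> real.
            (\<forall>s>0. g s > 0) \<and> g 1 = 1 \<and>
            convex_on {0<..} (\<lambda>s. ln (1 / g s)) \<and>
            (\<forall>s>0. g s = g (s + 1) - 1 / g (s + 1))
            \<longrightarrow> (\<forall>s>0. g s = ffun M s) \<and>
                (\<forall>s\<in>{0<..1}. (\<lambda>n. (psi ^^ n) ((1 / mseq (n - 1)) * (mseq (n - 1) / mseq n) powr s))
                                 \<longlonglongrightarrow> g s)) \<and>
         (\<forall>s\<in>{0<..1}. (\<lambda>n. (psi ^^ n) ((1 / mseq (n - 1)) * (mseq (n - 1) / mseq n) powr s))
                                 \<longlonglongrightarrow> ffun M s)"
proof -
  interpret moment_measure_space M
    by unfold_locales (fact assms)
  have f: "admissible (ffun M)"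
    unfolding admissible_def
    using ffun_pos ffun_one convex_on_ln_inverse_ffun ffun_functional_eq by blast
  have "(\<forall>s>0. g s = ffun M s) \<and>
        (\<forall>s\<in>{0<..1}. (\<lambda>n. (psi ^^ n) ((1 / mseq (n - 1)) * (mseq (n - 1) / mseq n) powr s)) \<longlonglongrightarrow> g s)"
    if "admissible g" for g
    using admissible_unique[OF that f] admissible_tendsto[OF that] by blast
  then show ?thesis
    using f admissible_tendsto[OF f] unfolding admissible_def by blast
qed

end
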